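(* Let $(\boldsymbol{x}^1,\boldsymbol{x}^2)\in(\mathbb{T}^3\times\mathbb{T}^3)\setminus\Delta$ and, for $\omega_1,\omega_2,\dots\in\Omega_0$, set $\boldsymbol{x}^j_0=\boldsymbol{x}^j$, $\boldsymbol{x}^j_n=f_{\omega_n}(\boldsymbol{x}^j_{n-1})=(x^j_n,y^j_n,z^j_n)$ for $j=1,2$. Then for any $\varepsilon>0$ there exist $N_1\in\mathbb{N}$ and $(\omega_1,\dots,\omega_{N_1})\in\Omega_0^{N_1}$ such that $x^1_{N_1}=x^2_{N_1}$, $y^1_{N_1}=y^2_{N_1}$ and $|z^1_{N_1}-z^2_{N_1}|<\varepsilon$. In particular $\mathrm{dist}_{\mathbb{T}^3}(\boldsymbol{x}^1_{N_1},\boldsymbol{x}^2_{N_1})<\varepsilon$.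
   Context: $\mathbb{T}^3=\mathbb{R}^3/(2\pi\mathbb{Z})^3$ with points $\boldsymbol{x}=(x,y,z)$ and its standard flat distance $\mathrm{dist}_{\mathbb{T}^3}$; $\Delta=\{(\boldsymbol{x}^1,\boldsymbol{x}^2):\boldsymbol{x}^1=\boldsymbol{x}^2\}$. Fix $U>0$ and let $\Omega_0=[-U,U]^3\times[0,2\pi)^3$, with elements $\omega=(\mathsf{A},\mathsf{B},\mathsf{C},\alpha,\beta,\gamma)$. Define maps of $\mathbb{T}^3$: $f_{(\mathsf{A},\alpha)}(x,y,z)=(x+\mathsf{A}\sin(z+\alpha),\ y+\mathsf{A}\cos(z+\alpha),\ z)$, $f_{(\mathsf{B},\beta)}(x,y,z)=(x,\ y+\mathsf{B}\sin(x+\beta),\ z+\mathsf{B}\cos(x+\beta))$, $f_{(\mathsf{C},\gamma)}(x,y,z)=(x+\mathsf{C}\cos(y+\gamma),\ y,\ z+\mathsf{C}\sin(y+\gamma))$, and $f_\omega=f_{(\mathsf{C},\gamma)}\circ f_{(\mathsf{B},\beta)}\circ f_{(\mathsf{A},\alpha)}$. *)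

theory Defs
  imports "HOL-Analysis.Analysis"
begin

text \<open>Points of the torus T^3 = R^3/(2 pi Z)^3 are represented by real triples
  (lifts); two triples denote the same torus point iff their coordinates agree mod 2 pi.\<close>

type_synonym pt = "real \<times> real \<times> real"
type_synonym param = "real \<times> real \<times> real \<times> real \<times> real \<times> real"

definition cong2pi :: "real \<Rightarrow> real \<Rightarrow> bool" where
  "cong2pi a b \<longleftrightarrow> (\<exists>k::int. a - b = 2 * pi * of_int k)"

definition teq :: "pt \<Rightarrow> pt \<Rightarrow> bool" where
  "teq p q \<longleftrightarrow> cong2pi (fst p) (fst q) \<and> cong2pi (fst (snd p)) (fst (snd q))
                 \<and> cong2pi (snd (snd p)) (snd (snd q))"

definition dist_T3 :: "pt \<Rightarrow> pt \<Rightarrow> real" where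
  "dist_T3 p q = Inf {sqrt ((fst p - fst q - 2 * pi * of_int k1)^2
                          + (fst (snd p) - fst (snd q) - 2 * pi * of_int k2)^2
                          + (snd (snd p) - snd (snd q) - 2 * pi * of_int k3)^2) | k1 k2 k3 :: int. True}"

definition dist_T1 :: "real \<Rightarrow> real \<Rightarrow> real" where
  "dist_T1 a b = Inf {\<bar>a - b - 2 * pi * of_int k\<bar> | k :: int. True}"

definition fA :: "real \<Rightarrow> real \<Rightarrow> pt \<Rightarrow> pt" where
  "fA A \<alpha> p = (case p of (x,y,z) \<Rightarrow> (x + A * sin (z + \<alpha>), y + A * cos (z + \<alpha>), z))"

definition fB :: "real \<Rightarrow> real \<Rightarrow> pt \<Rightarrow> pt" where
  "fB B \<beta> p = (case p of (x,y,z) \<Rightarrow> (x, y + B * sin (x + \<beta>), z + B * cos (x + \<beta>)))"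

definition fC :: "real \<Rightarrow> real \<Rightarrow> pt \<Rightarrow> pt" where
  "fC C \<gamma> p = (case p of (x,y,z) \<Rightarrow> (x + C * cos (y + \<gamma>), y, z + C * sin (y + \<gamma>)))"

definition f_omega :: "param \<Rightarrow> pt \<Rightarrow> pt" where
  "f_omega \<omega> = (case \<omega> of (A,B,C,\<alpha>,\<beta>,\<gamma>) \<Rightarrow> fC C \<gamma> \<circ> fB B \<beta> \<circ> fA A \<alpha>)"

definition Omega0 :: "real \<Rightarrow> param set" where
  "Omega0 U = {(A,B,C,\<alpha>,\<beta>,\<gamma>). A \<in> {-U..U} \<and> B \<in> {-U..U} \<and> C \<in> {-U..U}
                 \<and> \<alpha> \<in> {0..<2*pi} \<and> \<beta> \<in> {0..<2*pi} \<and> \<gamma> \<in> {0..<2*pi}}"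

text \<open>x_n = f_{omega_n}(x_{n-1}), with omega_1..omega_n given as the list ws (first applied first).\<close>
definition orbit :: "param list \<Rightarrow> pt \<Rightarrow> pt" where
  "orbit ws p = fold f_omega ws p"

end

theory Submission
  imports Defs
begin

text \<open>Each of the three shears fixes one coordinate c and, identifying the other two
  coordinates with a complex number, translates it by a * cis (c + alpha). For two points whose
  fixed coordinates c1, c2 differ mod 2 pi, the difference of their complex coordinates moves
  by a * cis alpha * (cis c1 - cis c2) while c1, c2 stay put; repeating one such shear n times,
  any prescribed difference is reached with amplitude |a| \<le> U once n is large. First the
  x-coordinates are separated (by the A- or C-shears, according to which of z, y is
  separated), then the B-shears set the z-difference to a small delta > 0, and finally the
  A-shears, which keep z, make the x- and y-differences vanish.\<close>

lemma cong2pi_refl [simp]: "cong2pi a a"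
  unfolding cong2pi_def by (intro exI[of _ 0]) simp

lemma not_cong2pi_if_diff_in_period:
  assumes "0 < a - b" and "a - b < 2 * pi"
  shows "\<not> cong2pi a b"
proof
  assume "cong2pi a b"
  then obtain k :: int where k: "a - b = 2 * pi * of_int k"
    unfolding cong2pi_def by blast
  have "(0::real) < of_int k" and "of_int k < (1::real)"
    using assms pi_gt_zero unfolding k by (simp_all add: zero_less_mult_iff)
  then show False by simp
qed

lemma cis_eq_imp_cong2pi:
  assumes "cis a = cis b"
  shows "cong2pi a b"
proof -
  have "cos (a - b) = 1"
    using assms by (simp add: cos_diff complex_eq_iff power2_eq_square flip: sin_squared_eq)
  then obtain k :: int where "a - b = real_of_int k * 2 * pi"
    using cos_one_2pi_int by blast
  then show ?thesis
    unfolding cong2pi_def by (intro exI[of _ k]) simp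
qed

lemma orbit_append: "orbit (ws @ vs) p = orbit vs (orbit ws p)"
  by (simp add: orbit_def)

lemma orbit_Nil [simp]: "orbit [] p = p"
  by (simp add: orbit_def)

lemma orbit_Cons [simp]: "orbit (w # ws) p = orbit ws (f_omega w p)"
  by (simp add: orbit_def)

locale shear =
  fixes fixed :: "pt \<Rightarrow> real" and plane :: "pt \<Rightarrow> complex"
    and shear_param :: "real \<Rightarrow> real \<Rightarrow> param"
  assumes fixed_shear: "fixed (f_omega (shear_param a \<alpha>) p) = fixed p"
    and plane_shear: "plane (f_omega (shear_param a \<alpha>) p) = plane p + a * cis (fixed p + \<alpha>)"
    and shear_param_Omega0: "\<bar>a\<bar> \<le> U \<Longrightarrow> 0 \<le> \<alpha> \<Longrightarrow> \<alpha> < 2 * pi \<Longrightarrow> shear_param a \<alpha> \<in> Omega0 U"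
begin

lemma fixed_orbit_replicate: "fixed (orbit (replicate n (shear_param a \<alpha>)) p) = fixed p"
  by (induction n arbitrary: p) (simp_all add: fixed_shear)

lemma plane_orbit_replicate:
  "plane (orbit (replicate n (shear_param a \<alpha>)) p) = plane p + of_nat n * a * cis (fixed p + \<alpha>)"
  by (induction n arbitrary: p)
    (simp_all add: fixed_shear plane_shear algebra_simps)

lemma exists_orbit_plane_diff:
  assumes U: "U > 0" and separated: "\<not> cong2pi (fixed p1) (fixed p2)"
  obtains ws where "ws \<noteq> []" "set ws \<subseteq> Omega0 U"
    "fixed (orbit ws p1) = fixed p1" "fixed (orbit ws p2) = fixed p2"
    "plane (orbit ws p1) - plane (orbit ws p2) = w"
proof -
  define g where "g = cis (fixed p1) - cis (fixed p2)"
  define z where "z = (w - (plane p1 - plane p2)) / g"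
  have "g \<noteq> 0"
    using separated cis_eq_imp_cong2pi by (auto simp: g_def)
  obtain n :: nat where n: "cmod z / U < n"
    using reals_Archimedean2 by blast
  moreover have "0 \<le> cmod z / U"
    using U by simp
  ultimately have "n > 0"
    by linarith
  define a where "a = cmod (z / of_nat n)"
  define \<alpha> where "\<alpha> = Arg2pi (z / of_nat n)"
  have polar: "of_real a * cis \<alpha> = z / of_nat n"
    using Arg2pi_eq[of "z / of_nat n"] by (simp add: a_def \<alpha>_def cis_conv_exp)
  have "\<bar>a\<bar> \<le> U"
    using n U \<open>n > 0\<close>
    by (simp add: a_def norm_divide pos_divide_le_eq pos_divide_less_eq mult.commute)
  then have param: "shear_param a \<alpha> \<in> Omega0 U"
    using shear_param_Omega0 Arg2pi_ge_0 Arg2pi_lt_2pi by (simp add: \<alpha>_def)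
  define ws where "ws = replicate n (shear_param a \<alpha>)"
  have "plane (orbit ws p1) - plane (orbit ws p2)
      = plane p1 - plane p2 + of_nat n * (of_real a * cis \<alpha>) * g"
    by (simp add: ws_def plane_orbit_replicate g_def algebra_simps flip: cis_mult)
  also have "\<dots> = w"
    using \<open>g \<noteq> 0\<close> \<open>n > 0\<close> by (simp add: polar z_def)
  finally show thesis
    using \<open>n > 0\<close> param by (intro that[of ws]) (auto simp: ws_def fixed_orbit_replicate)
qed

end

interpretation shear_A: shear "\<lambda>p. snd (snd p)" "\<lambda>p. Complex (fst (snd p)) (fst p)"
  "\<lambda>a \<alpha>. (a, 0, 0, \<alpha>, 0, 0)"
  by unfold_locales
    (auto simp: f_omega_def fA_def fB_def fC_def Omega0_def complex_eq_iff split: prod.splits)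

interpretation shear_B: shear "\<lambda>p. fst p" "\<lambda>p. Complex (snd (snd p)) (fst (snd p))"
  "\<lambda>b \<beta>. (0, b, 0, 0, \<beta>, 0)"
  by unfold_locales
    (auto simp: f_omega_def fA_def fB_def fC_def Omega0_def complex_eq_iff split: prod.splits)

interpretation shear_C: shear "\<lambda>p. fst (snd p)" "\<lambda>p. Complex (fst p) (snd (snd p))"
  "\<lambda>c \<gamma>. (0, 0, c, 0, 0, \<gamma>)"
  by unfold_locales
    (auto simp: f_omega_def fA_def fB_def fC_def Omega0_def complex_eq_iff split: prod.splits)

lemma exists_orbit_separating_x:
  assumes U: "U > 0" and distinct: "\<not> teq p1 p2"
  obtains ws where "set ws \<subseteq> Omega0 U" "\<not> cong2pi (fst (orbit ws p1)) (fst (orbit ws p2))"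
proof (cases "cong2pi (fst p1) (fst p2)")
  case False
  then show thesis
    using that[of "[]"] by simp
next
  case True
  have diff_pi: "\<not> cong2pi a b" if "a - b = pi" for a b :: real
    using not_cong2pi_if_diff_in_period[of a b] that pi_gt_zero by simp
  consider "\<not> cong2pi (snd (snd p1)) (snd (snd p2))" | "\<not> cong2pi (fst (snd p1)) (fst (snd p2))"
    using distinct True by (auto simp: teq_def)
  then show thesis
  proof cases
    case 1
    with U obtain ws where "set ws \<subseteq> Omega0 U" "fst (orbit ws p1) - fst (orbit ws p2) = pi"
      by (rule shear_A.exists_orbit_plane_diff[where w = "Complex 0 pi"]) (simp add: complex_eq_iff)
    then show thesis
      using that diff_pi by blast
  next
    case 2
    with U obtain ws where "set ws \<subseteq> Omega0 U" "fst (orbit ws p1) - fst (orbit ws p2) = pi"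
      by (rule shear_C.exists_orbit_plane_diff[where w = "Complex pi 0"]) (simp add: complex_eq_iff)
    then show thesis
      using that diff_pi by blast
  qed
qed

lemma exists_orbit_diff_z:
  assumes U: "U > 0" and distinct: "\<not> teq p1 p2" and \<delta>: "0 < \<delta>" "\<delta> < 2 * pi"
  obtains ws where "ws \<noteq> []" "set ws \<subseteq> Omega0 U" "orbit ws p1 - orbit ws p2 = (0, 0, \<delta>)"
proof -
  obtain ws0 where ws0: "set ws0 \<subseteq> Omega0 U"
    and x_separated: "\<not> cong2pi (fst (orbit ws0 p1)) (fst (orbit ws0 p2))"
    using exists_orbit_separating_x[OF U distinct] .
  define q1 q2 where "q1 = orbit ws0 p1" and "q2 = orbit ws0 p2"
  from U x_separated obtain ws1 where ws1: "set ws1 \<subseteq> Omega0 U"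
    and z_diff: "snd (snd (orbit ws1 q1)) - snd (snd (orbit ws1 q2)) = \<delta>"
    unfolding q1_def[symmetric] q2_def[symmetric]
    by (rule shear_B.exists_orbit_plane_diff[where w = "Complex \<delta> 0"]) (simp add: complex_eq_iff)
  define r1 r2 where "r1 = orbit ws1 q1" and "r2 = orbit ws1 q2"
  have "\<not> cong2pi (snd (snd r1)) (snd (snd r2))"
    using not_cong2pi_if_diff_in_period \<delta> z_diff by (simp add: r1_def r2_def)
  with U obtain ws2 where "ws2 \<noteq> []" "set ws2 \<subseteq> Omega0 U"
    "snd (snd (orbit ws2 r1)) = snd (snd r1)" "snd (snd (orbit ws2 r2)) = snd (snd r2)"
    "fst (orbit ws2 r1) = fst (orbit ws2 r2)" "fst (snd (orbit ws2 r1)) = fst (snd (orbit ws2 r2))"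
    by (rule shear_A.exists_orbit_plane_diff[where w = 0]) (simp add: complex_eq_iff)
  then show thesis
    using ws0 ws1 z_diff
    by (intro that[of "ws0 @ ws1 @ ws2"])
      (auto simp: orbit_append prod_eq_iff q1_def q2_def r1_def r2_def)
qed

lemma dist_T1_le_abs: "dist_T1 a b \<le> \<bar>a - b\<bar>"
proof -
  have "dist_T1 a b \<le> \<bar>a - b - 2 * pi * of_int 0\<bar>"
    unfolding dist_T1_def by (rule cInf_lower) (blast, auto intro: bdd_belowI[of _ 0])
  then show ?thesis by simp
qed

lemma dist_T3_le_euclidean:
  "dist_T3 p q \<le>
    sqrt ((fst p - fst q)^2 + (fst (snd p) - fst (snd q))^2 + (snd (snd p) - snd (snd q))^2)"
proof -
  have "dist_T3 p q \<le> sqrt ((fst p - fst q - 2 * pi * of_int 0)^2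
      + (fst (snd p) - fst (snd q) - 2 * pi * of_int 0)^2
      + (snd (snd p) - snd (snd q) - 2 * pi * of_int 0)^2)"
    unfolding dist_T3_def by (rule cInf_lower) (blast, auto intro: bdd_belowI[of _ 0])
  then show ?thesis by simp
qed

theorem lemma3p7:
  fixes U \<epsilon> :: real and p1 p2 :: pt
  assumes "U > 0" and "\<not> teq p1 p2" and "\<epsilon> > 0"
  shows "\<exists>N1 ws. N1 \<ge> 1 \<and> length ws = N1 \<and> set ws \<subseteq> Omega0 U
            \<and> cong2pi (fst (orbit ws p1)) (fst (orbit ws p2))
            \<and> cong2pi (fst (snd (orbit ws p1))) (fst (snd (orbit ws p2)))
            \<and> dist_T1 (snd (snd (orbit ws p1))) (snd (snd (orbit ws p2))) < \<epsilon>
            \<and> dist_T3 (orbit ws p1) (orbit ws p2) < \<epsilon>"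
proof -
  define \<delta> where "\<delta> = min \<epsilon> pi / 2"
  have \<delta>: "0 < \<delta>" "\<delta> < \<epsilon>" "\<delta> < 2 * pi"
    using \<open>\<epsilon> > 0\<close> pi_gt_zero by (auto simp: \<delta>_def min_def)
  obtain ws where ws: "ws \<noteq> []" "set ws \<subseteq> Omega0 U"
    and diff: "orbit ws p1 - orbit ws p2 = (0, 0, \<delta>)"
    using exists_orbit_diff_z[OF assms(1,2) \<delta>(1,3)] .
  from diff have "fst (orbit ws p1) = fst (orbit ws p2)"
    and "fst (snd (orbit ws p1)) = fst (snd (orbit ws p2))"
    and "snd (snd (orbit ws p1)) - snd (snd (orbit ws p2)) = \<delta>"
    by (simp_all add: prod_eq_iff)
  moreover note dist_T1_le_abs[of "snd (snd (orbit ws p1))" "snd (snd (orbit ws p2))"]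
    dist_T3_le_euclidean[of "orbit ws p1" "orbit ws p2"]
  ultimately show ?thesis
    using ws \<delta> by (intro exI[of _ "length ws"] exI[of _ ws]) (simp add: Suc_leI)
qed

end
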